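(* Let $\epsilon\ge0$ and let $U\in\mathscr P_+$ with $U^\theta\in\mathbb{SO}(k,K)$ for constants $0<k\le K<\infty$; let $J_t=\mathbb E[\int_t^\infty U_s^\theta ds\mid\mathcal F_t]$. If $\epsilon>0$, let $A,B>0$ be the positive solutions of $A=K^{-1}(A^\rho+\epsilon)$ and $B=k^{-1}(B^\rho+\epsilon)$; if $\epsilon=0$, set $A=K^{-\theta}$ and $B=k^{-\theta}$. Let $W$ be the unique fixed point of the operator $F^\epsilon_{U,U}$ for which there are constants $0<c_1\le c_2<\infty$ with $c_1J\le W\le c_2J$ (such a fixed point exists). Then $kA\,J\le W\le KB\,J$.
   Context: Work on a filtered probability space $(\Omega,\mathcal F,(\mathcal F_t)_{t\ge0},\mathbb P)$ with complete continuous filtration and trivial $\mathcal F_0$. $\mathscr P$ denotes progressively measurable processes, $\mathscr P_+$ (resp. $\mathscr P_{++}$) nonnegative (resp. strictly positive) ones. $\theta>1$ is fixed and $\rho=\frac{\theta-1}{\theta}$. For $X\in\mathscr P_+$, $J^X_t=\mathbb E[\int_t^\infty X_sds\mid\mathcal F_t]$. $\mathbb{SO}(k,K)$ is the set of $X\in\mathscr P_{++}$ with $\mathbb E\int_0^\infty X_tdt<\infty$ and $kJ^X\le X\le KJ^X$. For $U\in\mathscr P_+$, let $\mathbb I(h_{EZ},U)=\{W\in\mathscr P_+:\mathbb E\int_0^\infty U_sW_s^\rho ds<\infty\}$, and define $F^\epsilon_{U,U}:\mathbb I(h_{EZ},U)\to\mathscr P_+$ by $F^\epsilon_{U,U}(W)_t=\mathbb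 E[\int_t^\infty (U_sW_s^\rho+\epsilon U_s^\theta)ds\mid\mathcal F_t]$ (a càdlàg version being chosen). A fixed point is $W\in\mathbb I(h_{EZ},U)$ with $F^\epsilon_{U,U}(W)=W$. *)

theory Defs
  imports "HOL-Probability.Probability"
begin

definition filtered_prob_space_std :: "'a measure \<Rightarrow> (real \<Rightarrow> 'a measure) \<Rightarrow> bool" where
  "filtered_prob_space_std M F \<longleftrightarrow>
     prob_space M
   \<comment> \<open>complete probability space\<close>
   \<and> (\<forall>A B. A \<in> null_sets M \<longrightarrow> B \<subseteq> A \<longrightarrow> B \<in> sets M)
   \<comment> \<open>filtration of sub-sigma-algebras, increasing in time\<close>
   \<and> (\<forall>t\<ge>0. subalgebra M (F t))
   \<and> (\<forall>s t. 0 \<le> s \<longrightarrow> s \<le> t \<longrightarrow> sets (F s) \<subseteq> sets (F t))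
   \<comment> \<open>complete filtration: F 0 contains all null sets\<close>
   \<and> null_sets M \<subseteq> sets (F 0)
   \<comment> \<open>right-continuity\<close>
   \<and> (\<forall>t\<ge>0. sets (F t) = (\<Inter>s\<in>{t<..}. sets (F s)))
   \<comment> \<open>left-continuity\<close>
   \<and> (\<forall>t>0. sets (F t) = sigma_sets (space M) (\<Union>s\<in>{0..<t}. sets (F s)))
   \<comment> \<open>trivial F 0\<close>
   \<and> (\<forall>A\<in>sets (F 0). measure M A = 0 \<or> measure M A = 1)"

text \<open>Processes are functions X :: real \<Rightarrow> 'a \<Rightarrow> real (time, outcome); only t \<ge> 0 matters.\<close>

definition progressive :: "'a measure \<Rightarrow> (real \<Rightarrow> 'a measure) \<Rightarrow> (real \<Rightarrow> 'a \<Rightarrow> real) \<Rightarrow> bool" where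
  "progressive M F X \<longleftrightarrow>
     (\<forall>t\<ge>0. (\<lambda>p. X (fst p) (snd p)) \<in> borel_measurable (restrict_space borel {0..t} \<Otimes>\<^sub>M F t))"

definition prog_nonneg :: "'a measure \<Rightarrow> (real \<Rightarrow> 'a measure) \<Rightarrow> (real \<Rightarrow> 'a \<Rightarrow> real) \<Rightarrow> bool" where
  "prog_nonneg M F X \<longleftrightarrow> progressive M F X \<and> (\<forall>t\<ge>0. \<forall>\<omega>\<in>space M. 0 \<le> X t \<omega>)"

definition prog_pos :: "'a measure \<Rightarrow> (real \<Rightarrow> 'a measure) \<Rightarrow> (real \<Rightarrow> 'a \<Rightarrow> real) \<Rightarrow> bool" where
  "prog_pos M F X \<longleftrightarrow> progressive M F X \<and> (\<forall>t\<ge>0. \<forall>\<omega>\<in>space M. 0 < X t \<omega>)"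

definition finite_total :: "'a measure \<Rightarrow> (real \<Rightarrow> 'a \<Rightarrow> real) \<Rightarrow> bool" where
  "finite_total M X \<longleftrightarrow>
     (\<integral>\<^sup>+ \<omega>. (\<integral>\<^sup>+ s. ennreal (X s \<omega>) * indicator {0..} s \<partial>lborel) \<partial>M) < \<infinity>"

definition Jproc :: "'a measure \<Rightarrow> (real \<Rightarrow> 'a measure) \<Rightarrow> (real \<Rightarrow> 'a \<Rightarrow> real) \<Rightarrow> real \<Rightarrow> 'a \<Rightarrow> real" where
  "Jproc M F X t = real_cond_exp M (F t) (\<lambda>\<omega>. LINT s:{t..}|lborel. X s \<omega>)"

definition proc_le :: "'a measure \<Rightarrow> (real \<Rightarrow> 'a \<Rightarrow> real) \<Rightarrow> (real \<Rightarrow> 'a \<Rightarrow> real) \<Rightarrow> bool" where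
  "proc_le M X Y \<longleftrightarrow> (\<forall>t\<ge>0. AE \<omega> in M. X t \<omega> \<le> Y t \<omega>)"

definition SO :: "'a measure \<Rightarrow> (real \<Rightarrow> 'a measure) \<Rightarrow> real \<Rightarrow> real \<Rightarrow> (real \<Rightarrow> 'a \<Rightarrow> real) \<Rightarrow> bool" where
  "SO M F k K X \<longleftrightarrow> prog_pos M F X \<and> finite_total M X
     \<and> proc_le M (\<lambda>t \<omega>. k * Jproc M F X t \<omega>) X
     \<and> proc_le M X (\<lambda>t \<omega>. K * Jproc M F X t \<omega>)"

definition I_EZ :: "'a measure \<Rightarrow> (real \<Rightarrow> 'a measure) \<Rightarrow> real \<Rightarrow> (real \<Rightarrow> 'a \<Rightarrow> real) \<Rightarrow> (real \<Rightarrow> 'a \<Rightarrow> real) \<Rightarrow> bool" where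
  "I_EZ M F \<theta> U W \<longleftrightarrow> prog_nonneg M F W
     \<and> finite_total M (\<lambda>s \<omega>. U s \<omega> * W s \<omega> powr ((\<theta> - 1) / \<theta>))"

definition F_EZ :: "'a measure \<Rightarrow> (real \<Rightarrow> 'a measure) \<Rightarrow> real \<Rightarrow> real \<Rightarrow> (real \<Rightarrow> 'a \<Rightarrow> real) \<Rightarrow> (real \<Rightarrow> 'a \<Rightarrow> real) \<Rightarrow> real \<Rightarrow> 'a \<Rightarrow> real" where
  "F_EZ M F \<theta> \<epsilon> U W =
     Jproc M F (\<lambda>s \<omega>. U s \<omega> * W s \<omega> powr ((\<theta> - 1) / \<theta>) + \<epsilon> * U s \<omega> powr \<theta>)"

definition is_fixed_point_EZ :: "'a measure \<Rightarrow> (real \<Rightarrow> 'a measure) \<Rightarrow> real \<Rightarrow> real \<Rightarrow> (real \<Rightarrow> 'a \<Rightarrow> real) \<Rightarrow> (real \<Rightarrow> 'a \<Rightarrow> real) \<Rightarrow> bool" where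
  "is_fixed_point_EZ M F \<theta> \<epsilon> U W \<longleftrightarrow> I_EZ M F \<theta> U W
     \<and> (\<forall>t\<ge>0. AE \<omega> in M. W t \<omega> = F_EZ M F \<theta> \<epsilon> U W t \<omega>)"

end

theory Submission
  imports Defs
begin

(* Write V = U^\<theta> and J = J^V, so that k J \<le> V \<le> K J. Because U (c V)^\<rho> = c^\<rho> V, the fixed point
   equation W = J^(U W^\<rho> + \<epsilon> V) improves constants: c J \<le> W gives ((c/K)^\<rho> + \<epsilon>) J \<le> W, and
   W \<le> c J gives W \<le> ((c/k)^\<rho> + \<epsilon>) J. The admissible lower constants form a closed bounded set,
   so its supremum c is admissible and satisfies (c/K)^\<rho> + \<epsilon> \<le> c; since x \<mapsto> (x^\<rho> + \<epsilon>)/x is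
   strictly decreasing, c/K \<ge> A. Symmetrically the least upper constant is at most k B. This yields
   the sharper bounds K A J \<le> W \<le> k B J. *)

definition joint_fun :: "(real \<Rightarrow> 'a \<Rightarrow> real) \<Rightarrow> 'a \<times> real \<Rightarrow> real" where
  "joint_fun X = (\<lambda>(\<omega>, s). X s \<omega> * indicator {0..} s)"

lemma joint_fun_comp2:
  assumes "h 0 0 = 0"
  shows "joint_fun (\<lambda>s \<omega>. h (X s \<omega>) (Y s \<omega>)) = (\<lambda>p. h (joint_fun X p) (joint_fun Y p))"
  using assms by (auto simp: joint_fun_def indicator_def fun_eq_iff)

lemma joint_fun_cmult: "joint_fun (\<lambda>s \<omega>. c * X s \<omega>) = (\<lambda>p. c * joint_fun X p)"
  by (auto simp: joint_fun_def fun_eq_iff)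

lemma truncated_progressive_measurable:
  fixes X :: "real \<Rightarrow> 'a \<Rightarrow> real" and T :: real
  assumes sub: "subalgebra M G"
    and X: "(\<lambda>p. X (fst p) (snd p)) \<in> borel_measurable (restrict_space borel {0..T} \<Otimes>\<^sub>M G)"
  shows "(\<lambda>(\<omega>, s). X s \<omega> * indicator {0..T} s) \<in> borel_measurable (M \<Otimes>\<^sub>M lborel)"
proof -
  define S where "S = space M \<times> {0..T}"
  have "S \<in> sets (M \<Otimes>\<^sub>M lborel)"
    unfolding S_def by (intro pair_measureI) (auto intro: borel_closed)
  then have S_sets: "S \<inter> space (M \<Otimes>\<^sub>M lborel) \<in> sets (M \<Otimes>\<^sub>M lborel)"
    by simp
  have "measurable M M \<subseteq> measurable M G"
    using sub by (intro measurable_mono) (auto simp: subalgebra_def)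
  then have "(\<lambda>x. x) \<in> measurable M G"
    using measurable_ident_sets[of M M] by auto
  then have "fst \<in> measurable (M \<Otimes>\<^sub>M lborel) G"
    using measurable_compose[OF measurable_fst] by auto
  then have "(\<lambda>(\<omega>, s). (s, \<omega>)) \<in> measurable (restrict_space (M \<Otimes>\<^sub>M lborel) S) (restrict_space borel {0..T} \<Otimes>\<^sub>M G)"
    by (intro measurable_pair measurable_restrict_space2 measurable_restrict_space1)
       (auto simp: S_def space_restrict_space space_pair_measure o_def split_beta)
  from measurable_comp[OF this X]
  have "(\<lambda>(\<omega>, s). X s \<omega>) \<in> borel_measurable (restrict_space (M \<Otimes>\<^sub>M lborel) S)"
    by (simp add: o_def split_beta)
  then have "(\<lambda>p. indicator S p *\<^sub>R (\<lambda>(\<omega>, s). X s \<omega>) p) \<in> borel_measurable (M \<Otimes>\<^sub>M lborel)"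
    using borel_measurable_restrict_space_iff[OF S_sets] by blast
  then show ?thesis
    by (rule measurable_cong[THEN iffD1, rotated]) (auto simp: S_def space_pair_measure indicator_def)
qed

lemma progressive_joint_fun_measurable:
  assumes sub: "\<And>t. 0 \<le> t \<Longrightarrow> subalgebra M (F t)" and X: "progressive M F X"
  shows "joint_fun X \<in> borel_measurable (M \<Otimes>\<^sub>M lborel)"
proof (rule borel_measurable_LIMSEQ_real[where u = "\<lambda>n (\<omega>, s). X s \<omega> * indicator {0..real n} s"])
  fix p :: "'a \<times> real"
  obtain \<omega> s where p: "p = (\<omega>, s)" by (cases p)
  obtain N :: nat where "s \<le> real N" using real_arch_simple by blast
  then have "\<forall>\<^sub>F n in sequentially. X s \<omega> * indicator {0..real n} s = joint_fun X p"
    unfolding p joint_fun_def eventually_sequentially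
    by (intro exI[of _ N]) (auto simp: indicator_def)
  then show "(\<lambda>n. (\<lambda>(\<omega>, s). X s \<omega> * indicator {0..real n} s) p) \<longlonglongrightarrow> joint_fun X p"
    by (simp add: p tendsto_eventually)
next
  show "(\<lambda>(\<omega>, s). X s \<omega> * indicator {0..real n} s) \<in> borel_measurable (M \<Otimes>\<^sub>M lborel)" for n
    using truncated_progressive_measurable[OF sub[of "real n"]] X unfolding progressive_def by simp
qed

lemma integrable_joint_fun:
  assumes meas: "joint_fun X \<in> borel_measurable (M \<Otimes>\<^sub>M lborel)"
    and nonneg: "\<And>\<omega> s. \<omega> \<in> space M \<Longrightarrow> 0 \<le> s \<Longrightarrow> 0 \<le> X s \<omega>"
    and fin: "finite_total M X"
  shows "integrable (M \<Otimes>\<^sub>M lborel) (joint_fun X)"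
  unfolding integrable_iff_bounded
proof
  have "(\<integral>\<^sup>+p. ennreal (norm (joint_fun X p)) \<partial>(M \<Otimes>\<^sub>M lborel))
      = (\<integral>\<^sup>+\<omega>. \<integral>\<^sup>+s. ennreal (norm (joint_fun X (\<omega>, s))) \<partial>lborel \<partial>M)"
    using meas by (intro lborel.nn_integral_fst[symmetric]) simp
  also have "\<dots> = (\<integral>\<^sup>+\<omega>. \<integral>\<^sup>+s. ennreal (X s \<omega>) * indicator {0..} s \<partial>lborel \<partial>M)"
    using nonneg by (intro nn_integral_cong) (auto simp: joint_fun_def indicator_def)
  also have "\<dots> < \<infinity>"
    using fin by (simp add: finite_total_def)
  finally show "(\<integral>\<^sup>+p. ennreal (norm (joint_fun X p)) \<partial>(M \<Otimes>\<^sub>M lborel)) < \<infinity>" .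
qed (rule meas)

lemma tail_integral_integrable:
  assumes M: "sigma_finite_measure M" and X: "integrable (M \<Otimes>\<^sub>M lborel) (joint_fun X)"
    and t: "0 \<le> t"
  shows "AE \<omega> in M. set_integrable lborel {t..} (\<lambda>s. X s \<omega>)"
    and "integrable M (\<lambda>\<omega>. LINT s:{t..}|lborel. X s \<omega>)"
proof -
  interpret pair_sigma_finite M lborel
    using M by (simp add: pair_sigma_finite_def lborel.sigma_finite_measure_axioms)
  have "space M \<times> {t..} \<in> sets (M \<Otimes>\<^sub>M lborel)"
    by (intro pair_measureI) auto
  from integrable_mult_indicator[OF this X]
  have "integrable (M \<Otimes>\<^sub>M lborel) (\<lambda>p. indicator {t..} (snd p) *\<^sub>R X (snd p) (fst p))"
    by (rule Bochner_Integration.integrable_cong[OF refl, THEN iffD1, rotated])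
       (use t in \<open>auto simp: joint_fun_def indicator_def space_pair_measure\<close>)
  from AE_integrable_fst'[OF this] integrable_fst'[OF this]
  show "AE \<omega> in M. set_integrable lborel {t..} (\<lambda>s. X s \<omega>)"
    and "integrable M (\<lambda>\<omega>. LINT s:{t..}|lborel. X s \<omega>)"
    by (simp_all add: set_integrable_def set_lebesgue_integral_def)
qed

lemma AE_AE_lborel_le:
  fixes X Y :: "real \<Rightarrow> 'a \<Rightarrow> real"
  assumes M: "sigma_finite_measure M"
    and X: "joint_fun X \<in> borel_measurable (M \<Otimes>\<^sub>M lborel)"
    and Y: "joint_fun Y \<in> borel_measurable (M \<Otimes>\<^sub>M lborel)"
    and le: "\<And>s. 0 \<le> s \<Longrightarrow> AE \<omega> in M. X s \<omega> \<le> Y s \<omega>"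
  shows "AE \<omega> in M. AE s in lborel. 0 \<le> s \<longrightarrow> X s \<omega> \<le> Y s \<omega>"
proof -
  interpret pair_sigma_finite M lborel
    using M by (simp add: pair_sigma_finite_def lborel.sigma_finite_measure_axioms)
  have eq: "joint_fun X (\<omega>, s) \<le> joint_fun Y (\<omega>, s) \<longleftrightarrow> (0 \<le> s \<longrightarrow> X s \<omega> \<le> Y s \<omega>)" for \<omega> s
    by (auto simp: joint_fun_def indicator_def)
  have "Measurable.pred (M \<Otimes>\<^sub>M lborel) (\<lambda>p. joint_fun X p \<le> joint_fun Y p)"
    using X Y by measurable
  then have "{p \<in> space (M \<Otimes>\<^sub>M lborel). joint_fun X (fst p, snd p) \<le> joint_fun Y (fst p, snd p)}
      \<in> sets (M \<Otimes>\<^sub>M lborel)"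
    by (simp add: pred_def)
  note commute = AE_commute[OF this]
  have "AE s in lborel. AE \<omega> in M. joint_fun X (\<omega>, s) \<le> joint_fun Y (\<omega>, s)"
  proof (rule AE_I2)
    fix s :: real
    show "AE \<omega> in M. joint_fun X (\<omega>, s) \<le> joint_fun Y (\<omega>, s)"
      using le[of s] by (cases "0 \<le> s") (simp_all add: eq)
  qed
  then have "AE \<omega> in M. AE s in lborel. joint_fun X (\<omega>, s) \<le> joint_fun Y (\<omega>, s)"
    by (rule commute[THEN iffD2])
  then show ?thesis
    by (simp add: eq)
qed

lemma Jproc_scaled_mono:
  fixes X Y :: "real \<Rightarrow> 'a \<Rightarrow> real"
  assumes sub: "sigma_finite_subalgebra M (F t)" and t: "0 \<le> t"
    and X: "integrable (M \<Otimes>\<^sub>M lborel) (joint_fun X)"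
    and Y: "integrable (M \<Otimes>\<^sub>M lborel) (joint_fun Y)"
    and le: "\<And>s. 0 \<le> s \<Longrightarrow> AE \<omega> in M. a * X s \<omega> \<le> b * Y s \<omega>"
  shows "AE \<omega> in M. a * Jproc M F X t \<omega> \<le> b * Jproc M F Y t \<omega>"
proof -
  interpret sigma_finite_subalgebra M "F t" by (rule sub)
  note intX = tail_integral_integrable[OF sigma_finite_measure_axioms X t]
  note intY = tail_integral_integrable[OF sigma_finite_measure_axioms Y t]
  have "AE \<omega> in M. AE s in lborel. 0 \<le> s \<longrightarrow> a * X s \<omega> \<le> b * Y s \<omega>"
    using borel_measurable_integrable[OF X] borel_measurable_integrable[OF Y]
    by (intro AE_AE_lborel_le[OF sigma_finite_measure_axioms] le) (simp_all add: joint_fun_cmult)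
  with intX(1) intY(1)
  have "AE \<omega> in M. a * (LINT s:{t..}|lborel. X s \<omega>) \<le> b * (LINT s:{t..}|lborel. Y s \<omega>)"
  proof eventually_elim
    case (elim \<omega>)
    have "a * (LINT s:{t..}|lborel. X s \<omega>) = (LINT s:{t..}|lborel. a * X s \<omega>)" by simp
    also have "\<dots> \<le> (LINT s:{t..}|lborel. b * Y s \<omega>)"
      by (rule set_integral_mono_AE) (use elim t in \<open>auto elim!: AE_mp\<close>)
    also have "\<dots> = b * (LINT s:{t..}|lborel. Y s \<omega>)" by simp
    finally show ?case .
  qed
  then have "AE \<omega> in M. real_cond_exp M (F t) (\<lambda>\<omega>. a * (LINT s:{t..}|lborel. X s \<omega>)) \<omega>
      \<le> real_cond_exp M (F t) (\<lambda>\<omega>. b * (LINT s:{t..}|lborel. Y s \<omega>)) \<omega>"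
    by (rule real_cond_exp_mono) (use intX intY in auto)
  moreover have "AE \<omega> in M. real_cond_exp M (F t) (\<lambda>\<omega>. a * (LINT s:{t..}|lborel. X s \<omega>)) \<omega>
      = a * Jproc M F X t \<omega>"
    unfolding Jproc_def by (rule real_cond_exp_cmult) (rule intX)
  moreover have "AE \<omega> in M. real_cond_exp M (F t) (\<lambda>\<omega>. b * (LINT s:{t..}|lborel. Y s \<omega>)) \<omega>
      = b * Jproc M F Y t \<omega>"
    unfolding Jproc_def by (rule real_cond_exp_cmult) (rule intY)
  ultimately show ?thesis
    by eventually_elim simp
qed

lemma closed_AE_mult_le: "closed {c::real. AE x in M. c * f x \<le> g x}"
  unfolding closed_sequential_limits
proof (intro allI impI, elim conjE)
  fix c :: "nat \<Rightarrow> real" and l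
  assume c: "\<forall>n. c n \<in> {c. AE x in M. c * f x \<le> g x}" and lim: "c \<longlonglongrightarrow> l"
  have "AE x in M. \<forall>n. c n * f x \<le> g x"
    using c by (simp add: AE_all_countable)
  then have "AE x in M. l * f x \<le> g x"
    by eventually_elim (rule LIMSEQ_le_const2[OF tendsto_mult_right[OF lim]], auto)
  then show "l \<in> {c. AE x in M. c * f x \<le> g x}" by simp
qed

lemma closed_proc_le_mult_left: "closed {c::real. proc_le M (\<lambda>t \<omega>. c * J t \<omega>) X}"
proof -
  have "{c. proc_le M (\<lambda>t \<omega>. c * J t \<omega>) X} = (\<Inter>t\<in>{0..}. {c. AE \<omega> in M. c * J t \<omega> \<le> X t \<omega>})"
    by (auto simp: proc_le_def)
  then show ?thesis
    by (simp add: closed_INT closed_AE_mult_le)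
qed

lemma closed_proc_le_mult_right: "closed {c::real. proc_le M X (\<lambda>t \<omega>. c * J t \<omega>)}"
proof -
  have "closed {c. AE \<omega> in M. X t \<omega> \<le> c * J t \<omega>}" for t
    using closed_AE_mult_le[where M = M and f = "\<lambda>\<omega>. - J t \<omega>" and g = "\<lambda>\<omega>. - X t \<omega>"] by simp
  moreover have "{c. proc_le M X (\<lambda>t \<omega>. c * J t \<omega>)} = (\<Inter>t\<in>{0..}. {c. AE \<omega> in M. X t \<omega> \<le> c * J t \<omega>})"
    by (auto simp: proc_le_def)
  ultimately show ?thesis
    by (simp add: closed_INT)
qed

lemma powr_add_div_strict_antimono:
  fixes \<rho> \<epsilon> x y :: real
  assumes "\<rho> < 1" "0 \<le> \<epsilon>" "0 < x" "x < y"
  shows "(y powr \<rho> + \<epsilon>) / y < (x powr \<rho> + \<epsilon>) / x"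
proof -
  have eq: "(z powr \<rho> + \<epsilon>) / z = z powr (\<rho> - 1) + \<epsilon> / z" if "0 < z" for z :: real
    using that by (simp add: add_divide_distrib powr_diff)
  have "y powr (\<rho> - 1) < x powr (\<rho> - 1)"
    using assms by (intro powr_less_mono2_neg) auto
  moreover have "\<epsilon> / y \<le> \<epsilon> / x"
    using assms by (intro divide_left_mono) auto
  ultimately show ?thesis
    using assms by (simp add: eq)
qed

lemma fixed_point_le_supersolution:
  fixes \<rho> \<epsilon> K A x :: real
  assumes "\<rho> < 1" "0 \<le> \<epsilon>" "0 < A" "K * A = A powr \<rho> + \<epsilon>"
    and "0 < x" "x powr \<rho> + \<epsilon> \<le> K * x"
  shows "A \<le> x"
proof (rule ccontr)
  assume "\<not> A \<le> x"
  then have "(A powr \<rho> + \<epsilon>) / A < (x powr \<rho> + \<epsilon>) / x"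
    using assms by (intro powr_add_div_strict_antimono) auto
  moreover have "(A powr \<rho> + \<epsilon>) / A = K" and "(x powr \<rho> + \<epsilon>) / x \<le> K"
    using assms by (simp_all add: pos_divide_le_eq divide_eq_eq mult.commute)
  ultimately show False by linarith
qed

lemma subsolution_le_fixed_point:
  fixes \<rho> \<epsilon> k B x :: real
  assumes "\<rho> < 1" "0 \<le> \<epsilon>" "0 < B" "k * B = B powr \<rho> + \<epsilon>"
    and "k * x \<le> x powr \<rho> + \<epsilon>"
  shows "x \<le> B"
proof (rule ccontr)
  assume "\<not> x \<le> B"
  then have "(x powr \<rho> + \<epsilon>) / x < (B powr \<rho> + \<epsilon>) / B"
    using assms by (intro powr_add_div_strict_antimono) auto
  moreover have "(B powr \<rho> + \<epsilon>) / B = k" and "k \<le> (x powr \<rho> + \<epsilon>) / x"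
    using assms \<open>\<not> x \<le> B\<close> by (simp_all add: pos_le_divide_eq divide_eq_eq mult.commute)
  ultimately show False by linarith
qed

lemma mult_powr_conjugate:
  fixes u c \<theta> :: real
  assumes "0 \<le> u" "0 \<le> c" "1 < \<theta>"
  shows "u * (c * u powr \<theta>) powr ((\<theta> - 1) / \<theta>) = c powr ((\<theta> - 1) / \<theta>) * u powr \<theta>"
proof (cases "u = 0")
  case False
  then have u: "0 < u" using assms by simp
  have "(u powr \<theta>) powr ((\<theta> - 1) / \<theta>) = u powr (\<theta> - 1)"
    using assms by (simp add: powr_powr)
  then have "u * (c * u powr \<theta>) powr ((\<theta> - 1) / \<theta>) = c powr ((\<theta> - 1) / \<theta>) * (u * u powr (\<theta> - 1))"
    using assms by (simp add: powr_mult)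
  also have "u * u powr (\<theta> - 1) = u powr \<theta>"
    using u by (simp add: powr_mult_base)
  finally show ?thesis .
qed simp

lemma powr_uminus_fixed_point:
  fixes x \<theta> :: real
  assumes "0 < x" "1 < \<theta>"
  shows "x * x powr (- \<theta>) = (x powr (- \<theta>)) powr ((\<theta> - 1) / \<theta>)"
proof -
  have exponent: "1 + - \<theta> = - \<theta> * ((\<theta> - 1) / \<theta>)"
    using assms by (simp add: field_simps)
  have "x * x powr (- \<theta>) = x powr (1 + - \<theta>)"
    using assms by (intro powr_mult_base) simp
  also have "\<dots> = (x powr (- \<theta>)) powr ((\<theta> - 1) / \<theta>)"
    by (simp only: exponent powr_powr)
  finally show ?thesis .
qed

lemma EZ_constants_fixed_point_eqs:
  fixes \<theta> \<epsilon> k K A B :: real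
  assumes theta: "1 < \<theta>" and eps: "0 \<le> \<epsilon>" and k: "0 < k" "k \<le> K"
    and AB: "if \<epsilon> > 0 then
               (A > 0 \<and> A = (A powr ((\<theta> - 1) / \<theta>) + \<epsilon>) / K
                \<and> B > 0 \<and> B = (B powr ((\<theta> - 1) / \<theta>) + \<epsilon>) / k)
             else (A = K powr (- \<theta>) \<and> B = k powr (- \<theta>))"
  shows "0 < A \<and> K * A = A powr ((\<theta> - 1) / \<theta>) + \<epsilon> \<and> 0 < B \<and> k * B = B powr ((\<theta> - 1) / \<theta>) + \<epsilon>"
proof (cases "0 < \<epsilon>")
  case True
  with AB k show ?thesis
    by (simp add: eq_divide_eq mult.commute)
next
  case False
  with AB eps k theta show ?thesis
    by (simp add: powr_uminus_fixed_point)
qed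

locale EZ_fixed_point =
  fixes M :: "'a measure" and F :: "real \<Rightarrow> 'a measure"
    and \<theta> \<epsilon> k K :: real and U W :: "real \<Rightarrow> 'a \<Rightarrow> real"
  assumes space: "filtered_prob_space_std M F"
    and theta: "1 < \<theta>" and eps: "0 \<le> \<epsilon>" and k: "0 < k" "k \<le> K"
    and U: "prog_nonneg M F U"
    and SO: "SO M F k K (\<lambda>t \<omega>. U t \<omega> powr \<theta>)"
    and fixed_point: "is_fixed_point_EZ M F \<theta> \<epsilon> U W"
begin

abbreviation \<rho> :: real where "\<rho> \<equiv> (\<theta> - 1) / \<theta>"

abbreviation V :: "real \<Rightarrow> 'a \<Rightarrow> real" where "V \<equiv> \<lambda>t \<omega>. U t \<omega> powr \<theta>"

abbreviation J :: "real \<Rightarrow> 'a \<Rightarrow> real" where "J \<equiv> Jproc M F V"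

abbreviation rate :: "real \<Rightarrow> 'a \<Rightarrow> real" where
  "rate \<equiv> \<lambda>s \<omega>. U s \<omega> * W s \<omega> powr \<rho> + \<epsilon> * V s \<omega>"

lemma prob_space: "prob_space M"
  using space by (simp add: filtered_prob_space_std_def)

lemma subalgebra: "0 \<le> t \<Longrightarrow> subalgebra M (F t)"
  using space by (simp add: filtered_prob_space_std_def)

lemma sigma_finite_subalgebra: "0 \<le> t \<Longrightarrow> sigma_finite_subalgebra M (F t)"
  using prob_space subalgebra
  by (intro finite_measure_subalgebra_is_sigma_finite)
     (simp add: finite_measure_subalgebra_def finite_measure_subalgebra_axioms_def prob_space.finite_measure)

lemma V_pos: "\<omega> \<in> space M \<Longrightarrow> 0 \<le> s \<Longrightarrow> 0 < V s \<omega>"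
  using SO by (simp add: SO_def prog_pos_def)

lemma U_nonneg: "\<omega> \<in> space M \<Longrightarrow> 0 \<le> s \<Longrightarrow> 0 \<le> U s \<omega>"
  using U by (simp add: prog_nonneg_def)

lemma W_nonneg: "\<omega> \<in> space M \<Longrightarrow> 0 \<le> s \<Longrightarrow> 0 \<le> W s \<omega>"
  using fixed_point by (simp add: is_fixed_point_EZ_def I_EZ_def prog_nonneg_def)

lemma V_le_K_mult_J: "0 \<le> t \<Longrightarrow> AE \<omega> in M. V t \<omega> \<le> K * J t \<omega>"
  using SO by (simp add: SO_def proc_le_def)

lemma k_mult_J_le_V: "0 \<le> t \<Longrightarrow> AE \<omega> in M. k * J t \<omega> \<le> V t \<omega>"
  using SO by (simp add: SO_def proc_le_def)

lemma J_pos: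
  assumes t: "0 \<le> t"
  shows "AE \<omega> in M. 0 < J t \<omega>"
  using V_le_K_mult_J[OF t] AE_space
proof eventually_elim
  case (elim \<omega>)
  then have "0 < K * J t \<omega>" using V_pos[OF elim(2) t] by linarith
  then show ?case using k by (simp add: zero_less_mult_iff)
qed

lemma W_eq_Jproc_rate: "0 \<le> t \<Longrightarrow> AE \<omega> in M. W t \<omega> = Jproc M F rate t \<omega>"
  using fixed_point by (simp add: is_fixed_point_EZ_def F_EZ_def)

lemma joint_fun_measurable: "progressive M F X \<Longrightarrow> joint_fun X \<in> borel_measurable (M \<Otimes>\<^sub>M lborel)"
  using subalgebra by (rule progressive_joint_fun_measurable)

lemma integrable_V: "integrable (M \<Otimes>\<^sub>M lborel) (joint_fun V)"
  using SO V_pos by (intro integrable_joint_fun joint_fun_measurable) (auto simp: SO_def prog_pos_def less_imp_le)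

lemma integrable_rate: "integrable (M \<Otimes>\<^sub>M lborel) (joint_fun rate)"
proof -
  have "joint_fun (\<lambda>s \<omega>. U s \<omega> * W s \<omega> powr \<rho>) = (\<lambda>p. joint_fun U p * joint_fun W p powr \<rho>)"
    by (rule joint_fun_comp2) simp
  moreover have "joint_fun U \<in> borel_measurable (M \<Otimes>\<^sub>M lborel)"
    and "joint_fun W \<in> borel_measurable (M \<Otimes>\<^sub>M lborel)"
    using U fixed_point
    by (auto intro!: joint_fun_measurable simp: prog_nonneg_def is_fixed_point_EZ_def I_EZ_def)
  ultimately have "joint_fun (\<lambda>s \<omega>. U s \<omega> * W s \<omega> powr \<rho>) \<in> borel_measurable (M \<Otimes>\<^sub>M lborel)"
    by simp
  then have "integrable (M \<Otimes>\<^sub>M lborel) (joint_fun (\<lambda>s \<omega>. U s \<omega> * W s \<omega> powr \<rho>))"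
    using fixed_point U_nonneg
    by (intro integrable_joint_fun) (auto simp: is_fixed_point_EZ_def I_EZ_def)
  moreover have "joint_fun rate = (\<lambda>p. joint_fun (\<lambda>s \<omega>. U s \<omega> * W s \<omega> powr \<rho>) p + \<epsilon> * joint_fun V p)"
    by (rule joint_fun_comp2) simp
  ultimately show ?thesis
    using integrable_V by simp
qed

lemma rate_lower:
  assumes \<omega>: "\<omega> \<in> space M" and s: "0 \<le> s" and a: "0 \<le> a" and le: "a * V s \<omega> \<le> W s \<omega>"
  shows "(a powr \<rho> + \<epsilon>) * V s \<omega> \<le> rate s \<omega>"
proof -
  have "a powr \<rho> * V s \<omega> = U s \<omega> * (a * V s \<omega>) powr \<rho>"
    using mult_powr_conjugate[OF U_nonneg[OF \<omega> s] a theta] by simp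
  also have "\<dots> \<le> U s \<omega> * W s \<omega> powr \<rho>"
    using a le theta U_nonneg[OF \<omega> s] V_pos[OF \<omega> s] by (intro mult_left_mono powr_mono2) auto
  finally show ?thesis
    by (simp add: algebra_simps)
qed

lemma rate_upper:
  assumes \<omega>: "\<omega> \<in> space M" and s: "0 \<le> s" and a: "0 \<le> a" and le: "W s \<omega> \<le> a * V s \<omega>"
  shows "rate s \<omega> \<le> (a powr \<rho> + \<epsilon>) * V s \<omega>"
proof -
  have "U s \<omega> * W s \<omega> powr \<rho> \<le> U s \<omega> * (a * V s \<omega>) powr \<rho>"
    using le theta U_nonneg[OF \<omega> s] W_nonneg[OF \<omega> s] by (intro mult_left_mono powr_mono2) auto
  also have "\<dots> = a powr \<rho> * V s \<omega>"
    using mult_powr_conjugate[OF U_nonneg[OF \<omega> s] a theta] by simp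
  finally show ?thesis
    by (simp add: algebra_simps)
qed

lemma lower_bound_improve:
  assumes c: "0 \<le> c" and le: "proc_le M (\<lambda>t \<omega>. c * J t \<omega>) W"
  shows "proc_le M (\<lambda>t \<omega>. ((c / K) powr \<rho> + \<epsilon>) * J t \<omega>) W"
  unfolding proc_le_def
proof (intro allI impI)
  fix t :: real assume t: "0 \<le> t"
  have "AE \<omega> in M. ((c / K) powr \<rho> + \<epsilon>) * V s \<omega> \<le> 1 * rate s \<omega>" if s: "0 \<le> s" for s
  proof -
    have "AE \<omega> in M. c * J s \<omega> \<le> W s \<omega>"
      using le s by (simp add: proc_le_def)
    then show ?thesis using V_le_K_mult_J[OF s] AE_space
    proof eventually_elim
      case (elim \<omega>)
      have "(c / K) * V s \<omega> \<le> (c / K) * (K * J s \<omega>)"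
        using elim(2) c k by (intro mult_left_mono) auto
      then have "(c / K) * V s \<omega> \<le> W s \<omega>"
        using elim(1) s k by simp
      with elim(3) s c k show ?case
        by (simp add: rate_lower)
    qed
  qed
  then have "AE \<omega> in M. ((c / K) powr \<rho> + \<epsilon>) * J t \<omega> \<le> 1 * Jproc M F rate t \<omega>"
    by (intro Jproc_scaled_mono[where F = F, OF sigma_finite_subalgebra[OF t] t integrable_V integrable_rate])
  with W_eq_Jproc_rate[OF t] show "AE \<omega> in M. ((c / K) powr \<rho> + \<epsilon>) * J t \<omega> \<le> W t \<omega>"
    by eventually_elim simp
qed

lemma upper_bound_improve:
  assumes c: "0 \<le> c" and le: "proc_le M W (\<lambda>t \<omega>. c * J t \<omega>)"
  shows "proc_le M W (\<lambda>t \<omega>. ((c / k) powr \<rho> + \<epsilon>) * J t \<omega>)"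
  unfolding proc_le_def
proof (intro allI impI)
  fix t :: real assume t: "0 \<le> t"
  have "AE \<omega> in M. 1 * rate s \<omega> \<le> ((c / k) powr \<rho> + \<epsilon>) * V s \<omega>" if s: "0 \<le> s" for s
  proof -
    have "AE \<omega> in M. W s \<omega> \<le> c * J s \<omega>"
      using le s by (simp add: proc_le_def)
    then show ?thesis using k_mult_J_le_V[OF s] AE_space
    proof eventually_elim
      case (elim \<omega>)
      have "(c / k) * (k * J s \<omega>) \<le> (c / k) * V s \<omega>"
        using elim(2) c k by (intro mult_left_mono) auto
      then have "W s \<omega> \<le> (c / k) * V s \<omega>"
        using elim(1) s k by simp
      with elim(3) s c k show ?case
        by (simp add: rate_upper)
    qed
  qed
  then have "AE \<omega> in M. 1 * Jproc M F rate t \<omega> \<le> ((c / k) powr \<rho> + \<epsilon>) * J t \<omega>"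
    by (intro Jproc_scaled_mono[where F = F, OF sigma_finite_subalgebra[OF t] t integrable_rate integrable_V])
  with W_eq_Jproc_rate[OF t] show "AE \<omega> in M. W t \<omega> \<le> ((c / k) powr \<rho> + \<epsilon>) * J t \<omega>"
    by eventually_elim simp
qed

lemma proc_le_mult_J_left_mono:
  assumes "proc_le M (\<lambda>t \<omega>. d * J t \<omega>) X" "c \<le> d"
  shows "proc_le M (\<lambda>t \<omega>. c * J t \<omega>) X"
  unfolding proc_le_def
proof (intro allI impI)
  fix t :: real assume t: "0 \<le> t"
  from assms(1) t have "AE \<omega> in M. d * J t \<omega> \<le> X t \<omega>"
    by (simp add: proc_le_def)
  with J_pos[OF t] show "AE \<omega> in M. c * J t \<omega> \<le> X t \<omega>"
    by eventually_elim (use assms(2) in \<open>meson less_imp_le mult_right_mono order_trans\<close>)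
qed

lemma proc_le_mult_J_right_mono:
  assumes "proc_le M X (\<lambda>t \<omega>. c * J t \<omega>)" "c \<le> d"
  shows "proc_le M X (\<lambda>t \<omega>. d * J t \<omega>)"
  unfolding proc_le_def
proof (intro allI impI)
  fix t :: real assume t: "0 \<le> t"
  from assms(1) t have "AE \<omega> in M. X t \<omega> \<le> c * J t \<omega>"
    by (simp add: proc_le_def)
  with J_pos[OF t] show "AE \<omega> in M. X t \<omega> \<le> d * J t \<omega>"
    by eventually_elim (use assms(2) in \<open>meson less_imp_le mult_right_mono order_trans\<close>)
qed

lemma proc_le_mult_J_sandwich:
  assumes "proc_le M (\<lambda>t \<omega>. c * J t \<omega>) X" "proc_le M X (\<lambda>t \<omega>. d * J t \<omega>)"
  shows "c \<le> d"
proof -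
  have "AE \<omega> in M. c * J 0 \<omega> \<le> X 0 \<omega> \<and> X 0 \<omega> \<le> d * J 0 \<omega> \<and> 0 < J 0 \<omega>"
    using assms J_pos[of 0] by (auto simp: proc_le_def elim!: eventually_rev_mp)
  from eventually_happens'[OF prob_space.ae_filter_bot[OF prob_space] this]
  obtain \<omega> where "c * J 0 \<omega> \<le> X 0 \<omega>" "X 0 \<omega> \<le> d * J 0 \<omega>" "0 < J 0 \<omega>"
    by blast
  then show ?thesis
    by (meson mult_right_le_imp_le order_trans)
qed

lemma rho_less_1: "\<rho> < 1"
  using theta by simp

lemma W_lower_bound:
  assumes A: "0 < A" "K * A = A powr \<rho> + \<epsilon>"
    and c1: "0 < c1" "proc_le M (\<lambda>t \<omega>. c1 * J t \<omega>) W"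
    and c2: "proc_le M W (\<lambda>t \<omega>. c2 * J t \<omega>)"
  shows "proc_le M (\<lambda>t \<omega>. K * A * J t \<omega>) W"
proof -
  \<comment> \<open>0 < c1 is essential: for \<epsilon> = 0, W = 0 is also a fixed point.\<close>
  define S where "S = {c. proc_le M (\<lambda>t \<omega>. c * J t \<omega>) W}"
  have S: "c \<in> S \<longleftrightarrow> proc_le M (\<lambda>t \<omega>. c * J t \<omega>) W" for c
    by (simp add: S_def)
  have bdd: "bdd_above S"
    using proc_le_mult_J_sandwich[OF _ c2] by (auto simp: S intro: bdd_aboveI[of _ c2])
  have "c1 \<in> S"
    using c1 by (simp add: S)
  then have c1_le: "c1 \<le> Sup S"
    using bdd by (rule cSup_upper)
  have "closed S"
    unfolding S_def by (rule closed_proc_le_mult_left)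
  then have Sup: "proc_le M (\<lambda>t \<omega>. Sup S * J t \<omega>) W"
    using \<open>c1 \<in> S\<close> bdd by (auto simp flip: S intro: closed_contains_Sup)
  have "proc_le M (\<lambda>t \<omega>. ((Sup S / K) powr \<rho> + \<epsilon>) * J t \<omega>) W"
    using c1 c1_le by (intro lower_bound_improve[OF _ Sup]) simp
  then have "(Sup S / K) powr \<rho> + \<epsilon> \<le> K * (Sup S / K)"
    using bdd k by (simp add: cSup_upper flip: S)
  then have "A \<le> Sup S / K"
    using c1 c1_le k by (intro fixed_point_le_supersolution[OF rho_less_1 eps A]) auto
  then have "K * A \<le> Sup S"
    using k by (simp add: field_simps)
  with Sup show ?thesis
    by (rule proc_le_mult_J_left_mono)
qed

lemma W_upper_bound:
  assumes B: "0 < B" "k * B = B powr \<rho> + \<epsilon>"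
    and c2: "proc_le M W (\<lambda>t \<omega>. c2 * J t \<omega>)"
  shows "proc_le M W (\<lambda>t \<omega>. k * B * J t \<omega>)"
proof -
  define T where "T = {c. proc_le M W (\<lambda>t \<omega>. c * J t \<omega>)}"
  have T: "c \<in> T \<longleftrightarrow> proc_le M W (\<lambda>t \<omega>. c * J t \<omega>)" for c
    by (simp add: T_def)
  have zero: "proc_le M (\<lambda>t \<omega>. 0 * J t \<omega>) W"
    using W_nonneg by (simp add: proc_le_def AE_I2)
  have T_nonneg: "0 \<le> c" if "c \<in> T" for c
    using that unfolding T by (rule proc_le_mult_J_sandwich[OF zero])
  then have bdd: "bdd_below T"
    by (rule bdd_belowI)
  have "c2 \<in> T"
    using c2 by (simp add: T)
  have "closed T"
    unfolding T_def by (rule closed_proc_le_mult_right)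
  then have "Inf T \<in> T"
    using \<open>c2 \<in> T\<close> bdd by (auto intro: closed_contains_Inf)
  then have Inf: "proc_le M W (\<lambda>t \<omega>. Inf T * J t \<omega>)"
    by (simp add: T)
  have "proc_le M W (\<lambda>t \<omega>. ((Inf T / k) powr \<rho> + \<epsilon>) * J t \<omega>)"
    using T_nonneg[OF \<open>Inf T \<in> T\<close>] Inf by (rule upper_bound_improve)
  then have "Inf T \<le> (Inf T / k) powr \<rho> + \<epsilon>"
    using bdd by (intro cInf_lower) (simp_all add: T)
  then have "k * (Inf T / k) \<le> (Inf T / k) powr \<rho> + \<epsilon>"
    using k by simp
  then have "Inf T / k \<le> B"
    by (rule subsolution_le_fixed_point[OF rho_less_1 eps B])
  then have "Inf T \<le> k * B"
    using k by (simp add: field_simps)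
  with Inf show ?thesis
    by (rule proc_le_mult_J_right_mono)
qed

end

theorem corollary6p4:
  fixes M :: "'a measure" and F :: "real \<Rightarrow> 'a measure"
    and \<theta> \<epsilon> k K A B :: real
    and U W :: "real \<Rightarrow> 'a \<Rightarrow> real"
  assumes space: "filtered_prob_space_std M F"
    and theta: "\<theta> > 1"
    and eps: "\<epsilon> \<ge> 0"
    and kK: "0 < k" "k \<le> K"
    and U: "prog_nonneg M F U"
    and USO: "SO M F k K (\<lambda>t \<omega>. U t \<omega> powr \<theta>)"
    and AB: "if \<epsilon> > 0 then
               (A > 0 \<and> A = (A powr ((\<theta> - 1) / \<theta>) + \<epsilon>) / K
                \<and> B > 0 \<and> B = (B powr ((\<theta> - 1) / \<theta>) + \<epsilon>) / k)
             else (A = K powr (- \<theta>) \<and> B = k powr (- \<theta>))"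
    and W: "is_fixed_point_EZ M F \<theta> \<epsilon> U W"
    and Wbd: "\<exists>c1 c2. 0 < c1 \<and> c1 \<le> c2
               \<and> proc_le M (\<lambda>t \<omega>. c1 * Jproc M F (\<lambda>s \<omega>. U s \<omega> powr \<theta>) t \<omega>) W
               \<and> proc_le M W (\<lambda>t \<omega>. c2 * Jproc M F (\<lambda>s \<omega>. U s \<omega> powr \<theta>) t \<omega>)"
  shows "proc_le M (\<lambda>t \<omega>. k * A * Jproc M F (\<lambda>s \<omega>. U s \<omega> powr \<theta>) t \<omega>) W
       \<and> proc_le M W (\<lambda>t \<omega>. K * B * Jproc M F (\<lambda>s \<omega>. U s \<omega> powr \<theta>) t \<omega>)"
proof -
  interpret EZ_fixed_point M F \<theta> \<epsilon> k K U W
    using space theta eps kK U USO W by unfold_locales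
  obtain c1 c2 where c1: "0 < c1" "proc_le M (\<lambda>t \<omega>. c1 * J t \<omega>) W"
    and c2: "proc_le M W (\<lambda>t \<omega>. c2 * J t \<omega>)"
    using Wbd by blast
  have A: "0 < A" "K * A = A powr \<rho> + \<epsilon>" and B: "0 < B" "k * B = B powr \<rho> + \<epsilon>"
    using EZ_constants_fixed_point_eqs[OF theta eps kK AB] by auto
  have "proc_le M (\<lambda>t \<omega>. k * A * J t \<omega>) W"
    using W_lower_bound[OF A c1 c2] by (rule proc_le_mult_J_left_mono) (use A(1) kK in simp)
  moreover have "proc_le M W (\<lambda>t \<omega>. K * B * J t \<omega>)"
    using W_upper_bound[OF B c2] by (rule proc_le_mult_J_right_mono) (use B(1) kK in simp)
  ultimately show ?thesis ..
qed

end
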